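(* Let $\theta^*$ be an optimal solution of OPT and let $m^*(t)$ be the number of jobs not yet completed at time $t$ under $\theta^*$. For any two times $t_1,t_2>0$, if $m^*(t_1)=m^*(t_2)$ then $\theta_i^*(t_1)=\theta_i^*(t_2)$ for all $i=1,\dots,M$.
   Context: Setting (problem OPT). There are $M$ jobs, all available at time $0$, with sizes $x_1\ge x_2\ge\cdots\ge x_M>0$ and weights $0<w_1\le w_2\le\cdots\le w_M$. A total resource $B>0$ is shared. The speedup function $s:[0,B]\to[0,\infty)$ satisfies: $s(0)=0$; $s$ is strictly increasing, strictly concave, differentiable, and $s'$ is continuous on $[0,B]$. A schedule consists of functions $\theta_i:(0,\infty)\to[0,B]$, $i=1,\dots,M$, each right-continuous in $t$, with $\sum_{i=1}^M\theta_i(t)\le B$ for all $t>0$. The service received by job $i$ on $[t_1,t_2]$ is $Q_i(t_1,t_2)=\int_{t_1}^{t_2}s(\theta_i(t))\,dt$. The completion time $T_i$ of job $i$ satisfies $Q_i(0,T_i)=x_i$, and $\theta_i(t)=0$ for $t>T_i$. OPT is the problem of choosing a schedule minimizing $J=\sum_{i=1}^M w_iT_i$. An optimal solution is a feasible schedule attaining the minimum. *)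

theory Defs
  imports "HOL-Analysis.Analysis"
begin

definition strict_concave_on :: "real set \<Rightarrow> (real \<Rightarrow> real) \<Rightarrow> bool" where
  "strict_concave_on S f \<longleftrightarrow> convex S \<and>
     (\<forall>x\<in>S. \<forall>y\<in>S. x \<noteq> y \<longrightarrow> (\<forall>u. 0 < u \<and> u < 1 \<longrightarrow>
        f (u * x + (1 - u) * y) > u * f x + (1 - u) * f y))"

definition speedup_fn :: "real \<Rightarrow> (real \<Rightarrow> real) \<Rightarrow> bool" where
  "speedup_fn B s \<longleftrightarrow> s 0 = 0 \<and> strict_mono_on {0..B} s \<and> strict_concave_on {0..B} s \<and>
     (\<exists>s'. (\<forall>y\<in>{0..B}. (s has_real_derivative s' y) (at y within {0..B})) \<and>
           continuous_on {0..B} s')"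

definition feasible_schedule ::
  "nat \<Rightarrow> real \<Rightarrow> (real \<Rightarrow> real) \<Rightarrow> (nat \<Rightarrow> real) \<Rightarrow>
   (nat \<Rightarrow> real \<Rightarrow> real) \<Rightarrow> (nat \<Rightarrow> real) \<Rightarrow> bool" where
  "feasible_schedule M B s x \<theta> T \<longleftrightarrow>
     (\<forall>i\<in>{1..M}. \<forall>t>0. 0 \<le> \<theta> i t \<and> \<theta> i t \<le> B) \<and>
     (\<forall>t>0. (\<Sum>i=1..M. \<theta> i t) \<le> B) \<and>
     (\<forall>i\<in>{1..M}. \<forall>t>0. continuous (at_right t) (\<theta> i)) \<and>
     (\<forall>i\<in>{1..M}. ((\<lambda>t. s (\<theta> i t)) has_integral x i) {0..T i}) \<and>
     (\<forall>i\<in>{1..M}. \<forall>t>T i. \<theta> i t = 0)"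

definition total_cost :: "nat \<Rightarrow> (nat \<Rightarrow> real) \<Rightarrow> (nat \<Rightarrow> real) \<Rightarrow> real" where
  "total_cost M w T = (\<Sum>i=1..M. w i * T i)"

definition optimal_schedule ::
  "nat \<Rightarrow> real \<Rightarrow> (real \<Rightarrow> real) \<Rightarrow> (nat \<Rightarrow> real) \<Rightarrow> (nat \<Rightarrow> real) \<Rightarrow>
   (nat \<Rightarrow> real \<Rightarrow> real) \<Rightarrow> (nat \<Rightarrow> real) \<Rightarrow> bool" where
  "optimal_schedule M B s x w \<theta> T \<longleftrightarrow> feasible_schedule M B s x \<theta> T \<and>
     (\<forall>\<theta>' T'. feasible_schedule M B s x \<theta>' T' \<longrightarrow> total_cost M w T \<le> total_cost M w T')"

definition remaining_jobs :: "nat \<Rightarrow> (nat \<Rightarrow> real) \<Rightarrow> real \<Rightarrow> nat" where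
  "remaining_jobs M T t = card {i\<in>{1..M}. t < T i}"

end

theory Submission
  imports Defs
begin

text \<open>Suppose no job completes in (a, b] and replace every allocation on [a, b) by its mean over
  [a, b]. The resource constraint is preserved, and by Jensen's inequality for the concave speedup
  every job receives at least as much service by its completion time; if some allocation is not
  constant on [a, b), right-continuity makes the gain strictly positive for that job. Stopping
  every job once it has received its size then yields a feasible schedule in which no job finishes
  later and that job finishes strictly earlier, contradicting optimality. So an optimal allocation
  is constant between consecutive completions, and equal numbers of remaining jobs at t1 and t2
  mean that no completion lies between them.\<close>

lemma strict_concave_onD:
  assumes "strict_concave_on S f" "x \<in> S" "y \<in> S" "x \<noteq> y" "0 < v" "v < 1"
  shows "v * f x + (1 - v) * f y < f (v * x + (1 - v) * y)"
  using assms unfolding strict_concave_on_def by blast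

lemma strict_concave_on_le_tangent:
  fixes s :: "real \<Rightarrow> real"
  assumes conc: "strict_concave_on {l..u} s"
    and der: "(s has_real_derivative d) (at a within {l..u})"
    and a: "a \<in> {l..u}" and y: "y \<in> {l..u}"
  shows "s y \<le> s a + d * (y - a)"
proof (cases "y = a")
  case False
  \<comment> \<open>difference quotients of s along the segment from a to y exceed s y - s a and tend to d (y - a)\<close>
  define z where "z v = v * y + (1 - v) * a" for v
  have z_mem: "z v \<in> {l..u}" if "0 < v" "v < 1" for v
    unfolding z_def using a y that convexD[of "{l..u}" y a v "1 - v"] by simp
  have near_0: "\<forall>\<^sub>F v in at_right 0. 0 < v \<and> v < (1::real)"
    using eventually_at_right_real[of 0 1] by simp
  have "filterlim z (at a within {l..u}) (at_right 0)"
    unfolding filterlim_at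
  proof
    show "\<forall>\<^sub>F v in at_right 0. z v \<in> {l..u} \<and> z v \<noteq> a"
      using near_0 by eventually_elim (use z_mem False in \<open>auto simp: z_def algebra_simps\<close>)
    have "((\<lambda>v. v * y + (1 - v) * a) \<longlongrightarrow> 0 * y + (1 - 0) * a) (at_right 0)"
      by (intro tendsto_intros)
    then show "(z \<longlongrightarrow> a) (at_right 0)"
      by (simp add: z_def[abs_def])
  qed
  from filterlim_compose[OF der[unfolded has_field_derivative_iff] this]
  have "((\<lambda>v. (s (z v) - s a) / (z v - a) * (y - a)) \<longlongrightarrow> d * (y - a)) (at_right 0)"
    by (intro tendsto_intros)
  moreover have "\<forall>\<^sub>F v in at_right 0. s y - s a \<le> (s (z v) - s a) / (z v - a) * (y - a)"
    using near_0
  proof eventually_elim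
    case (elim v)
    have "v * s y + (1 - v) * s a < s (z v)"
      unfolding z_def using strict_concave_onD[OF conc y a False] elim by blast
    then have "s y - s a < (s (z v) - s a) / v"
      using elim by (simp add: field_simps)
    moreover have "z v - a = v * (y - a)"
      by (simp add: z_def algebra_simps)
    then have "(s (z v) - s a) / (z v - a) * (y - a) = (s (z v) - s a) / v"
      using False elim by simp
    ultimately show ?case
      by simp
  qed
  ultimately have "s y - s a \<le> d * (y - a)"
    by (intro tendsto_lowerbound) auto
  then show ?thesis
    by simp
qed simp

lemma strict_concave_on_less_tangent:
  fixes s :: "real \<Rightarrow> real"
  assumes conc: "strict_concave_on {l..u} s"
    and der: "(s has_real_derivative d) (at a within {l..u})"
    and a: "a \<in> {l..u}" and y: "y \<in> {l..u}" and "y \<noteq> a"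
  shows "s y < s a + d * (y - a)"
proof -
  define z where "z = (1/2) * y + (1 - 1/2) * a"
  have "(1/2) * s y + (1 - 1/2) * s a < s z"
    unfolding z_def by (rule strict_concave_onD[OF conc y a \<open>y \<noteq> a\<close>]) auto
  moreover have "z \<in> {l..u}"
    using a y by (auto simp: z_def)
  then have "s z \<le> s a + d * (z - a)"
    by (rule strict_concave_on_le_tangent[OF conc der a])
  ultimately show ?thesis
    by (simp add: z_def algebra_simps)
qed

lemma integral_pos_if_continuous_at_right:
  fixes g :: "real \<Rightarrow> real"
  assumes int: "g integrable_on {a..b}" and nonneg: "\<And>t. t \<in> {a..b} \<Longrightarrow> 0 \<le> g t"
    and t0: "a \<le> t0" "t0 < b" and cont: "continuous (at_right t0) g" and pos: "0 < g t0"
  shows "0 < integral {a..b} g"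
proof -
  have "\<forall>\<^sub>F t in at_right t0. g t0 / 2 < g t"
    using cont pos unfolding continuous_within by (intro order_tendstoD(1)) auto
  then obtain r where r: "t0 < r" and big: "\<And>t. t0 < t \<Longrightarrow> t < r \<Longrightarrow> g t0 / 2 < g t"
    unfolding eventually_at_right_field by blast
  define r' where "r' = (t0 + min r b) / 2"
  have r': "t0 < r'" "r' < r" "r' < b"
    using r t0 by (auto simp: r'_def)
  have bound: "g t0 / 2 \<le> g t" if "t \<in> {t0..r'}" for t
    using that big[of t] pos r' by (cases "t = t0") auto
  have int': "g integrable_on {t0..r'}"
    by (rule integrable_subinterval_real[OF int]) (use t0 r' in auto)
  have "0 < (r' - t0) * (g t0 / 2)"
    using r' pos by simp
  also have "\<dots> \<le> integral {t0..r'} g"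
    using has_integral_const_real[of "g t0 / 2" t0 r'] r' bound
    by (intro has_integral_le[OF _ integrable_integral[OF int']]) auto
  also have "\<dots> \<le> integral {a..b} g"
    by (rule integral_subset_le[OF _ int' int]) (use t0 r' nonneg in auto)
  finally show ?thesis .
qed

lemma integrable_if_strict_mono_on_comp:
  fixes s f :: "real \<Rightarrow> real"
  assumes mono: "strict_mono_on {l..u} s" and int: "(\<lambda>t. s (f t)) integrable_on {a..b}"
    and range: "\<And>t. t \<in> {a..b} \<Longrightarrow> f t \<in> {l..u}"
  shows "f integrable_on {a..b}"
proof -
  \<comment> \<open>g is a monotone, hence Borel, left inverse of s on [l, u], so f = g \<circ> (s \<circ> f) is measurable\<close>
  define g where "g y = Sup ({l} \<union> {v \<in> {l..u}. s v \<le> y})" for y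
  have left_inverse: "g (s v) = v" if "v \<in> {l..u}" for v
  proof -
    have "{l} \<union> {w \<in> {l..u}. s w \<le> s v} = {l..v}"
      using strict_mono_on_less_eq[OF mono _ \<open>v \<in> {l..u}\<close>] \<open>v \<in> {l..u}\<close> by auto
    then show ?thesis
      using \<open>v \<in> {l..u}\<close> by (simp add: g_def)
  qed
  have "mono g"
    unfolding g_def
    by (intro monoI cSup_subset_mono) (auto simp: bdd_above_def intro!: exI[of _ "max l u"])
  then have "g \<in> borel_measurable borel"
    by (rule borel_measurable_mono)
  moreover have "(\<lambda>t. s (f t)) \<in> borel_measurable (lebesgue_on {a..b})"
    using int by (rule integrable_imp_measurable)
  ultimately have "(\<lambda>t. g (s (f t))) \<in> borel_measurable (lebesgue_on {a..b})"
    by (rule measurable_compose[rotated])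
  moreover have "f \<in> borel_measurable (lebesgue_on {a..b}) \<longleftrightarrow>
      (\<lambda>t. g (s (f t))) \<in> borel_measurable (lebesgue_on {a..b})"
    by (rule measurable_cong) (simp add: space_restrict_space left_inverse[OF range])
  ultimately have "f \<in> borel_measurable (lebesgue_on {a..b})"
    by simp
  moreover have "\<bar>f t\<bar> \<le> \<bar>l\<bar> + \<bar>u\<bar>" if "t \<in> {a..b}" for t
    using range[OF that] by auto
  ultimately show ?thesis
    by (rule measurable_bounded_by_integrable_imp_integrable_real[OF _ integrable_const_ivl _
        fmeasurableD[OF lmeasurable_interval(1)]])
qed

definition interval_mean :: "real \<Rightarrow> real \<Rightarrow> (real \<Rightarrow> real) \<Rightarrow> real" where
  "interval_mean a b f = integral {a..b} f / (b - a)"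

definition flatten_on :: "real \<Rightarrow> real \<Rightarrow> (real \<Rightarrow> real) \<Rightarrow> real \<Rightarrow> real" where
  "flatten_on a b f t = (if a \<le> t \<and> t < b then interval_mean a b f else f t)"

definition flattening_gain :: "(real \<Rightarrow> real) \<Rightarrow> real \<Rightarrow> real \<Rightarrow> (real \<Rightarrow> real) \<Rightarrow> real" where
  "flattening_gain s a b f = (b - a) * s (interval_mean a b f) - integral {a..b} (\<lambda>t. s (f t))"

lemma interval_mean_const [simp]: "a < b \<Longrightarrow> interval_mean a b (\<lambda>_. c) = c"
  by (simp add: interval_mean_def)

lemma interval_mean_eq_0:
  assumes "\<And>t. t \<in> {a..b} \<Longrightarrow> f t = 0"
  shows "interval_mean a b f = 0"
  using integral_cong[of "{a..b}" f "\<lambda>_. 0"] assms by (simp add: interval_mean_def)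

lemma interval_mean_mono:
  assumes "a < b" "f integrable_on {a..b}" "g integrable_on {a..b}"
    and "\<And>t. t \<in> {a..b} \<Longrightarrow> f t \<le> g t"
  shows "interval_mean a b f \<le> interval_mean a b g"
  using integral_le[OF assms(2-4)] assms(1) by (simp add: interval_mean_def divide_right_mono)

lemma interval_mean_sum:
  assumes "finite I" "\<And>i. i \<in> I \<Longrightarrow> f i integrable_on {a..b}"
  shows "interval_mean a b (\<lambda>t. \<Sum>i\<in>I. f i t) = (\<Sum>i\<in>I. interval_mean a b (f i))"
  using assms by (simp add: interval_mean_def integral_sum sum_divide_distrib)

lemma interval_mean_mem:
  assumes "a < b" "f integrable_on {a..b}" "\<And>t. t \<in> {a..b} \<Longrightarrow> f t \<in> {l..u}"
  shows "interval_mean a b f \<in> {l..u}"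
  using interval_mean_mono[OF assms(1) integrable_const_ivl assms(2), of l]
    interval_mean_mono[OF assms(1) assms(2) integrable_const_ivl, of u] assms
  by auto

lemma sum_interval_mean_le:
  assumes "a < b" "finite I" "\<And>i. i \<in> I \<Longrightarrow> f i integrable_on {a..b}"
    and "\<And>t. t \<in> {a..b} \<Longrightarrow> (\<Sum>i\<in>I. f i t) \<le> c"
  shows "(\<Sum>i\<in>I. interval_mean a b (f i)) \<le> c"
proof -
  have "(\<Sum>i\<in>I. interval_mean a b (f i)) = interval_mean a b (\<lambda>t. \<Sum>i\<in>I. f i t)"
    using assms(2,3) by (rule interval_mean_sum[symmetric])
  also have "\<dots> \<le> interval_mean a b (\<lambda>_. c)"
    using assms by (intro interval_mean_mono integrable_sum integrable_const_ivl) auto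
  finally show ?thesis
    using \<open>a < b\<close> by simp
qed

lemma continuous_at_right_flatten_on:
  assumes "continuous (at_right t) f"
  shows "continuous (at_right t) (flatten_on a b f)"
proof -
  consider "t < a" | "a \<le> t" "t < b" | "b \<le> t"
    by linarith
  then show ?thesis
  proof cases
    case 1
    have "continuous (at_right t) (flatten_on a b f) \<longleftrightarrow> continuous (at_right t) f"
      using eventually_at_right_real[OF 1]
      by (intro continuous_at_within_cong) (use 1 in \<open>auto simp: flatten_on_def elim!: eventually_mono\<close>)
    then show ?thesis
      using assms by simp
  next
    case 2
    have "continuous (at_right t) (flatten_on a b f) \<longleftrightarrow>
        continuous (at_right t) (\<lambda>_. interval_mean a b f)"
      using eventually_at_right_real[OF 2(2)]
      by (intro continuous_at_within_cong) (use 2 in \<open>auto simp: flatten_on_def elim!: eventually_mono\<close>)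
    then show ?thesis
      by simp
  next
    case 3
    have "continuous (at_right t) (flatten_on a b f) \<longleftrightarrow> continuous (at_right t) f"
      using eventually_at_right_less[of t]
      by (intro continuous_at_within_cong) (use 3 in \<open>auto simp: flatten_on_def elim!: eventually_mono\<close>)
    then show ?thesis
      using assms by simp
  qed
qed

lemma flatten_on_eq_self:
  assumes "\<And>t. t \<in> {a..b} \<Longrightarrow> f t = 0"
  shows "flatten_on a b f = f"
  using interval_mean_eq_0[OF assms] assms by (auto simp: flatten_on_def fun_eq_iff)

lemma flattening_gain_eq_0:
  assumes "s 0 = 0" "\<And>t. t \<in> {a..b} \<Longrightarrow> f t = 0"
  shows "flattening_gain s a b f = 0"
  using interval_mean_eq_0[OF assms(2)] integral_cong[of "{a..b}" "\<lambda>t. s (f t)" "\<lambda>_. 0"] assms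
  by (simp add: flattening_gain_def)

lemma has_integral_flatten_on:
  fixes s f :: "real \<Rightarrow> real"
  assumes int: "((\<lambda>t. s (f t)) has_integral X) {c..d}" and "c \<le> a" "a < b" "b \<le> d"
  shows "((\<lambda>t. s (flatten_on a b f t)) has_integral X + flattening_gain s a b f) {c..d}"
proof -
  define m where "m = interval_mean a b f"
  have "(\<lambda>t. s (f t)) integrable_on {a..b}"
    by (rule integrable_subinterval_real[OF has_integral_integrable[OF int]]) (use assms in auto)
  then have "((\<lambda>t. s m - s (f t)) has_integral flattening_gain s a b f) {a..b}"
    using has_integral_const_real[of "s m" a b] \<open>a < b\<close>
    by (auto simp: flattening_gain_def m_def mult.commute intro!: has_integral_diff integrable_integral)
  then have "((\<lambda>t. if t \<in> {a..b} then s m - s (f t) else 0) has_integral flattening_gain s a b f) {c..d}"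
    using assms by (subst has_integral_restrict) auto
  from has_integral_spike_finite[OF _ _ has_integral_add[OF int this], of "{b}"] show ?thesis
    by (auto simp: flatten_on_def m_def)
qed

lemma has_integral_tangent_gap:
  fixes s f :: "real \<Rightarrow> real"
  assumes "a < b" "f integrable_on {a..b}" "(\<lambda>t. s (f t)) integrable_on {a..b}"
  defines "m \<equiv> interval_mean a b f"
  shows "((\<lambda>t. s m + d * (f t - m) - s (f t)) has_integral flattening_gain s a b f) {a..b}"
proof -
  have "((\<lambda>t. s m + d * (f t - m)) has_integral (b - a) * s m + d * (integral {a..b} f - (b - a) * m))
      {a..b}"
    using has_integral_const_real[of "s m" a b] has_integral_const_real[of m a b] assms(1)
    by (intro has_integral_add has_integral_mult_right has_integral_diff integrable_integral assms(2))
       (auto simp: mult.commute)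
  moreover have "integral {a..b} f - (b - a) * m = 0"
    using assms(1) by (simp add: m_def interval_mean_def)
  ultimately show ?thesis
    unfolding flattening_gain_def m_def[symmetric]
    using has_integral_diff[OF _ integrable_integral[OF assms(3)]] by fastforce
qed

text \<open>Jensen's inequality, proved by integrating the tangent line of s at the mean.\<close>

lemma flattening_gain_nonneg:
  fixes s s' f :: "real \<Rightarrow> real"
  assumes conc: "strict_concave_on {l..u} s"
    and der: "\<And>y. y \<in> {l..u} \<Longrightarrow> (s has_real_derivative s' y) (at y within {l..u})"
    and "a < b" and f_int: "f integrable_on {a..b}" and sf_int: "(\<lambda>t. s (f t)) integrable_on {a..b}"
    and range: "\<And>t. t \<in> {a..b} \<Longrightarrow> f t \<in> {l..u}"
  shows "0 \<le> flattening_gain s a b f"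
proof -
  define m where "m = interval_mean a b f"
  have m: "m \<in> {l..u}"
    unfolding m_def using \<open>a < b\<close> f_int range by (rule interval_mean_mem)
  have "0 \<le> s m + s' m * (f t - m) - s (f t)" if "t \<in> {a..b}" for t
    using strict_concave_on_le_tangent[OF conc der[OF m] m range[OF that]] by simp
  then show ?thesis
    by (rule has_integral_nonneg[OF has_integral_tangent_gap[OF \<open>a < b\<close> f_int sf_int, folded m_def]])
qed

lemma flattening_gain_pos:
  fixes s s' f :: "real \<Rightarrow> real"
  assumes conc: "strict_concave_on {l..u} s"
    and der: "\<And>y. y \<in> {l..u} \<Longrightarrow> (s has_real_derivative s' y) (at y within {l..u})"
    and "a < b" and f_int: "f integrable_on {a..b}" and sf_int: "(\<lambda>t. s (f t)) integrable_on {a..b}"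
    and range: "\<And>t. t \<in> {a..b} \<Longrightarrow> f t \<in> {l..u}"
    and t0: "a \<le> t0" "t0 < b" and cont: "continuous (at_right t0) f"
    and ne: "f t0 \<noteq> interval_mean a b f"
  shows "0 < flattening_gain s a b f"
proof -
  define m where "m = interval_mean a b f"
  define h where "h t = s m + s' m * (f t - m) - s (f t)" for t
  have m: "m \<in> {l..u}"
    unfolding m_def using \<open>a < b\<close> f_int range by (rule interval_mean_mem)
  have t0_mem: "t0 \<in> {a..b}"
    using t0 by simp
  have h_int: "(h has_integral flattening_gain s a b f) {a..b}"
    unfolding h_def m_def by (rule has_integral_tangent_gap[OF \<open>a < b\<close> f_int sf_int])
  have "0 \<le> h t" if "t \<in> {a..b}" for t
    using strict_concave_on_le_tangent[OF conc der[OF m] m range[OF that]] by (simp add: h_def)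
  moreover have "0 < h t0"
    using strict_concave_on_less_tangent[OF conc der[OF m] m range[OF t0_mem]] ne
    by (simp add: h_def m_def)
  moreover have "continuous (at_right t0) h"
  proof -
    have "continuous (at (f t0) within {l..u}) s"
      using DERIV_continuous_on[OF der] range[OF t0_mem] continuous_on_eq_continuous_within by blast
    moreover have "\<forall>\<^sub>F t in at_right t0. f t \<in> {l..u}"
      using eventually_at_right_real[OF t0(2)] by eventually_elim (use range t0 in auto)
    ultimately have "((\<lambda>t. s (f t)) \<longlongrightarrow> s (f t0)) (at_right t0)"
      using cont continuous_within_tendsto_compose unfolding continuous_within by blast
    then show ?thesis
      using cont unfolding h_def continuous_within by (intro tendsto_intros)
  qed
  ultimately have "0 < integral {a..b} h"
    using h_int by (intro integral_pos_if_continuous_at_right[OF _ _ t0]) auto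
  then show ?thesis
    using h_int by (simp add: integral_unique)
qed

lemma feasible_scheduleD:
  assumes "feasible_schedule M B s x \<theta> T"
  shows feasible_schedule_nonneg: "\<And>i t. i \<in> {1..M} \<Longrightarrow> 0 < t \<Longrightarrow> 0 \<le> \<theta> i t"
    and feasible_schedule_le_bound: "\<And>i t. i \<in> {1..M} \<Longrightarrow> 0 < t \<Longrightarrow> \<theta> i t \<le> B"
    and feasible_schedule_sum_le: "\<And>t. 0 < t \<Longrightarrow> (\<Sum>i=1..M. \<theta> i t) \<le> B"
    and feasible_schedule_continuous_at_right:
      "\<And>i t. i \<in> {1..M} \<Longrightarrow> 0 < t \<Longrightarrow> continuous (at_right t) (\<theta> i)"
    and feasible_schedule_has_integral:
      "\<And>i. i \<in> {1..M} \<Longrightarrow> ((\<lambda>t. s (\<theta> i t)) has_integral x i) {0..T i}"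
    and feasible_schedule_zero_after: "\<And>i t. i \<in> {1..M} \<Longrightarrow> T i < t \<Longrightarrow> \<theta> i t = 0"
  using assms unfolding feasible_schedule_def by blast+

lemma feasible_schedule_zero_from_completion:
  assumes feas: "feasible_schedule M B s x \<theta> T" and i: "i \<in> {1..M}" and "T i \<le> t" "0 < t"
  shows "\<theta> i t = 0"
proof (cases "T i < t")
  case False
  then have "t = T i"
    using \<open>T i \<le> t\<close> by simp
  have "(\<theta> i \<longlongrightarrow> \<theta> i t) (at_right t)"
    using feasible_schedule_continuous_at_right[OF feas i \<open>0 < t\<close>] by (simp add: continuous_within)
  moreover have "\<forall>\<^sub>F u in at_right t. \<theta> i u = 0"
    using eventually_at_right_less[of t]
    by eventually_elim (use feasible_schedule_zero_after[OF feas i] \<open>t = T i\<close> in auto)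
  then have "(\<theta> i \<longlongrightarrow> 0) (at_right t)"
    by (simp add: tendsto_eventually)
  ultimately show ?thesis
    using tendsto_unique[of "at_right t" "\<theta> i"] by simp
qed (rule feasible_schedule_zero_after[OF feas i])

lemma feasible_schedule_service_integrable:
  assumes feas: "feasible_schedule M B s x \<theta> T" and "s 0 = 0" and i: "i \<in> {1..M}" and "0 \<le> a"
  shows "(\<lambda>t. s (\<theta> i t)) integrable_on {a..b}"
proof -
  define g where "g t = (if t \<in> {0..T i} then s (\<theta> i t) else 0)" for t
  have sub: "{0..T i} \<subseteq> {0..max b (T i)}"
    by auto
  have "(g has_integral x i) {0..max b (T i)}"
    unfolding g_def has_integral_restrict[OF sub] by (rule feasible_schedule_has_integral[OF feas i])
  then have "g integrable_on {a..b}"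
    by (rule integrable_subinterval_real[OF has_integral_integrable]) (use \<open>0 \<le> a\<close> in auto)
  moreover have "g t = s (\<theta> i t)" if "t \<in> {a..b}" for t
  proof (cases "t \<le> T i")
    case True
    then show ?thesis
      using that \<open>0 \<le> a\<close> by (simp add: g_def)
  next
    case False
    then show ?thesis
      using feasible_schedule_zero_after[OF feas i, of t] \<open>s 0 = 0\<close> by (simp add: g_def)
  qed
  ultimately show ?thesis
    by (rule integrable_eq)
qed

lemma feasible_schedule_allocation_integrable:
  assumes feas: "feasible_schedule M B s x \<theta> T" and "s 0 = 0" and mono: "strict_mono_on {0..B} s"
    and i: "i \<in> {1..M}" and "0 < a"
  shows "\<theta> i integrable_on {a..b}"
  using mono feasible_schedule_service_integrable[OF feas \<open>s 0 = 0\<close> i, of a b]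
  by (rule integrable_if_strict_mono_on_comp)
     (use \<open>0 < a\<close> feasible_schedule_nonneg[OF feas i] feasible_schedule_le_bound[OF feas i] in auto)

lemma feasible_schedule_flatten_on:
  assumes feas: "feasible_schedule M B s x \<theta> T" and "s 0 = 0" and mono: "strict_mono_on {0..B} s"
    and "0 < a" "a < b" and sep: "\<And>i. i \<in> {1..M} \<Longrightarrow> T i \<le> a \<or> b \<le> T i"
  shows "feasible_schedule M B s (\<lambda>i. x i + flattening_gain s a b (\<theta> i)) (\<lambda>i. flatten_on a b (\<theta> i)) T"
proof -
  have int: "\<theta> i integrable_on {a..b}" if "i \<in> {1..M}" for i
    using feasible_schedule_allocation_integrable[OF feas \<open>s 0 = 0\<close> mono that \<open>0 < a\<close>] .
  have mean_range: "interval_mean a b (\<theta> i) \<in> {0..B}" if "i \<in> {1..M}" for i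
    using \<open>a < b\<close> int[OF that]
    by (rule interval_mean_mem)
       (use that \<open>0 < a\<close> feasible_schedule_nonneg[OF feas] feasible_schedule_le_bound[OF feas] in auto)
  have idle: "flatten_on a b (\<theta> i) = \<theta> i" "flattening_gain s a b (\<theta> i) = 0"
    if "i \<in> {1..M}" "T i \<le> a" for i
  proof -
    have "\<theta> i t = 0" if "t \<in> {a..b}" for t
      using feasible_schedule_zero_from_completion[OF feas \<open>i \<in> {1..M}\<close>] that \<open>T i \<le> a\<close> \<open>0 < a\<close>
      by simp
    then show "flatten_on a b (\<theta> i) = \<theta> i" "flattening_gain s a b (\<theta> i) = 0"
      using \<open>s 0 = 0\<close> by (auto intro: flatten_on_eq_self flattening_gain_eq_0)
  qed
  show ?thesis
    unfolding feasible_schedule_def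
  proof (intro conjI ballI allI impI)
    fix i and t :: real
    assume "i \<in> {1..M}" "0 < t"
    then show "0 \<le> flatten_on a b (\<theta> i) t" "flatten_on a b (\<theta> i) t \<le> B"
      using mean_range feasible_schedule_nonneg[OF feas] feasible_schedule_le_bound[OF feas]
      by (auto simp: flatten_on_def)
    show "continuous (at_right t) (flatten_on a b (\<theta> i))"
      using feasible_schedule_continuous_at_right[OF feas \<open>i \<in> {1..M}\<close> \<open>0 < t\<close>]
      by (rule continuous_at_right_flatten_on)
  next
    fix t :: real
    assume "0 < t"
    show "(\<Sum>i=1..M. flatten_on a b (\<theta> i) t) \<le> B"
    proof (cases "a \<le> t \<and> t < b")
      case True
      have "(\<Sum>i=1..M. interval_mean a b (\<theta> i)) \<le> B"
        using \<open>a < b\<close>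
        by (rule sum_interval_mean_le) (use int feasible_schedule_sum_le[OF feas] \<open>0 < a\<close> in auto)
      with True show ?thesis
        by (simp add: flatten_on_def)
    next
      case False
      then have "flatten_on a b (\<theta> i) t = \<theta> i t" for i
        by (auto simp: flatten_on_def)
      then show ?thesis
        using feasible_schedule_sum_le[OF feas \<open>0 < t\<close>] by simp
    qed
  next
    fix i
    assume i: "i \<in> {1..M}"
    show "((\<lambda>t. s (flatten_on a b (\<theta> i) t)) has_integral x i + flattening_gain s a b (\<theta> i)) {0..T i}"
      using sep[OF i] feasible_schedule_has_integral[OF feas i] idle[OF i] \<open>0 < a\<close> \<open>a < b\<close>
      by (auto intro: has_integral_flatten_on)
  next
    fix i and t :: real
    assume i: "i \<in> {1..M}" and "T i < t"
    show "flatten_on a b (\<theta> i) t = 0"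
    proof (cases "T i \<le> a")
      case True
      then show ?thesis
        using idle(1)[OF i True] feasible_schedule_zero_after[OF feas i \<open>T i < t\<close>] by simp
    next
      case False
      then show ?thesis
        using sep[OF i] \<open>T i < t\<close> feasible_schedule_zero_after[OF feas i \<open>T i < t\<close>]
        by (simp add: flatten_on_def)
    qed
  qed
qed

lemma has_integral_truncation_time:
  fixes f :: "real \<Rightarrow> real"
  assumes int: "(f has_integral X) {0..T}" and "0 < x" "x \<le> X"
  obtains T' where "T' \<le> T" "x < X \<Longrightarrow> T' < T" "(f has_integral x) {0..T'}"
proof -
  have "0 \<le> T"
    using int \<open>0 < x\<close> \<open>x \<le> X\<close> by (cases "0 \<le> T") auto
  define G where "G t = integral {0..t} f" for t
  have "continuous_on {0..T} G"
    unfolding G_def using int by (intro indefinite_integral_continuous_1) blast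
  moreover have "G 0 = 0" "G T = X"
    using int by (auto simp: G_def integral_unique)
  ultimately obtain T' where T': "0 \<le> T'" "T' \<le> T" "G T' = x"
    using IVT'[of G 0 x T] \<open>0 < x\<close> \<open>x \<le> X\<close> \<open>0 \<le> T\<close> by auto
  have "(f has_integral x) {0..T'}"
    using T' integrable_subinterval_real[OF has_integral_integrable[OF int], of 0 T']
    by (auto simp: G_def has_integral_integral)
  moreover have "T' < T" if "x < X"
    using T' \<open>G T = X\<close> that by (cases "T' = T") auto
  ultimately show ?thesis
    using that T' by blast
qed

lemma continuous_at_right_truncate:
  fixes f :: "real \<Rightarrow> real"
  assumes "continuous (at_right t) f"
  shows "continuous (at_right t) (\<lambda>t. if t < T' then f t else 0)"
proof (cases "t < T'")
  case True
  have "continuous (at_right t) (\<lambda>t. if t < T' then f t else 0) \<longleftrightarrow> continuous (at_right t) f"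
    using eventually_at_right_real[OF True]
    by (intro continuous_at_within_cong) (use True in \<open>auto elim!: eventually_mono\<close>)
  then show ?thesis
    using assms by simp
next
  case False
  have "continuous (at_right t) (\<lambda>t. if t < T' then f t else 0) \<longleftrightarrow> continuous (at_right t) (\<lambda>_. 0 :: real)"
    using eventually_at_right_less[of t]
    by (intro continuous_at_within_cong) (use False in \<open>auto elim!: eventually_mono\<close>)
  then show ?thesis
    by simp
qed

lemma feasible_schedule_truncate:
  assumes feas: "feasible_schedule M B s X \<phi> T"
    and x: "\<And>i. i \<in> {1..M} \<Longrightarrow> 0 < x i \<and> x i \<le> X i"
  obtains T' where "feasible_schedule M B s x (\<lambda>i t. if t < T' i then \<phi> i t else 0) T'"
    and "\<And>i. i \<in> {1..M} \<Longrightarrow> T' i \<le> T i"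
    and "\<And>i. i \<in> {1..M} \<Longrightarrow> x i < X i \<Longrightarrow> T' i < T i"
proof -
  have "\<exists>T'. T' \<le> T i \<and> (x i < X i \<longrightarrow> T' < T i) \<and> ((\<lambda>t. s (\<phi> i t)) has_integral x i) {0..T'}"
    if i: "i \<in> {1..M}" for i
    using has_integral_truncation_time[OF feasible_schedule_has_integral[OF feas i], of "x i"] x[OF i]
    by blast
  then obtain T' where T': "\<And>i. i \<in> {1..M} \<Longrightarrow>
      T' i \<le> T i \<and> (x i < X i \<longrightarrow> T' i < T i) \<and> ((\<lambda>t. s (\<phi> i t)) has_integral x i) {0..T' i}"
    by metis
  then have T'_int: "((\<lambda>t. s (\<phi> i t)) has_integral x i) {0..T' i}" if "i \<in> {1..M}" for i
    using that by blast
  define \<theta> where "\<theta> i t = (if t < T' i then \<phi> i t else 0)" for i t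
  have "feasible_schedule M B s x \<theta> T'"
    unfolding feasible_schedule_def
  proof (intro conjI ballI allI impI)
    fix i and t :: real
    assume i: "i \<in> {1..M}" and "0 < t"
    then show "0 \<le> \<theta> i t" "\<theta> i t \<le> B"
      using feasible_schedule_nonneg[OF feas i \<open>0 < t\<close>] feasible_schedule_le_bound[OF feas i \<open>0 < t\<close>]
      by (auto simp: \<theta>_def)
    show "continuous (at_right t) (\<theta> i)"
      unfolding \<theta>_def[abs_def]
      by (rule continuous_at_right_truncate[OF feasible_schedule_continuous_at_right[OF feas i \<open>0 < t\<close>]])
  next
    fix t :: real
    assume "0 < t"
    have "(\<Sum>i=1..M. \<theta> i t) \<le> (\<Sum>i=1..M. \<phi> i t)"
      using feasible_schedule_nonneg[OF feas _ \<open>0 < t\<close>] by (intro sum_mono) (auto simp: \<theta>_def)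
    then show "(\<Sum>i=1..M. \<theta> i t) \<le> B"
      using feasible_schedule_sum_le[OF feas \<open>0 < t\<close>] by linarith
  next
    fix i
    assume "i \<in> {1..M}"
    show "((\<lambda>t. s (\<theta> i t)) has_integral x i) {0..T' i}"
      by (rule has_integral_spike_finite[of "{T' i}", OF _ _ T'_int[OF \<open>i \<in> {1..M}\<close>]])
        (auto simp: \<theta>_def)
  next
    fix i and t :: real
    assume "T' i < t"
    then show "\<theta> i t = 0"
      by (simp add: \<theta>_def)
  qed
  then show ?thesis
    using that T' unfolding \<theta>_def by blast
qed

lemma optimal_schedule_no_surplus:
  assumes opt: "optimal_schedule M B s x w \<theta> T"
    and x_pos: "\<And>i. i \<in> {1..M} \<Longrightarrow> 0 < x i" and w_pos: "\<And>i. i \<in> {1..M} \<Longrightarrow> 0 < w i"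
    and feas: "feasible_schedule M B s X \<phi> T" and surplus: "\<And>i. i \<in> {1..M} \<Longrightarrow> x i \<le> X i"
    and i: "i \<in> {1..M}"
  shows "X i = x i"
proof (rule ccontr)
  assume "X i \<noteq> x i"
  obtain T' where feas': "feasible_schedule M B s x (\<lambda>i t. if t < T' i then \<phi> i t else 0) T'"
    and earlier: "\<And>j. j \<in> {1..M} \<Longrightarrow> T' j \<le> T j"
    and strictly_earlier: "\<And>j. j \<in> {1..M} \<Longrightarrow> x j < X j \<Longrightarrow> T' j < T j"
    using feasible_schedule_truncate[OF feas] x_pos surplus by blast
  have "total_cost M w T' < total_cost M w T"
    unfolding total_cost_def
  proof (rule sum_strict_mono_ex1)
    show "\<forall>j\<in>{1..M}. w j * T' j \<le> w j * T j"
      using earlier w_pos by (simp add: less_imp_le)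
    have "T' i < T i"
      using strictly_earlier[OF i] surplus[OF i] \<open>X i \<noteq> x i\<close> by simp
    then have "w i * T' i < w i * T i"
      using w_pos[OF i] by (rule mult_strict_left_mono)
    then show "\<exists>j\<in>{1..M}. w j * T' j < w j * T j"
      using i by blast
  qed simp
  then show False
    using opt feas' unfolding optimal_schedule_def by fastforce
qed

lemma optimal_schedule_flat_between_completions:
  fixes s s' :: "real \<Rightarrow> real"
  assumes opt: "optimal_schedule M B s x w \<theta> T"
    and x_pos: "\<And>i. i \<in> {1..M} \<Longrightarrow> 0 < x i" and w_pos: "\<And>i. i \<in> {1..M} \<Longrightarrow> 0 < w i"
    and "s 0 = 0" and mono: "strict_mono_on {0..B} s" and conc: "strict_concave_on {0..B} s"
    and der: "\<And>y. y \<in> {0..B} \<Longrightarrow> (s has_real_derivative s' y) (at y within {0..B})"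
    and "0 < a" "a < b" and sep: "\<And>i. i \<in> {1..M} \<Longrightarrow> T i \<le> a \<or> b \<le> T i"
    and i: "i \<in> {1..M}" and t: "a \<le> t" "t < b"
  shows "\<theta> i t = interval_mean a b (\<theta> i)"
proof (rule ccontr)
  assume ne: "\<theta> i t \<noteq> interval_mean a b (\<theta> i)"
  have feas: "feasible_schedule M B s x \<theta> T"
    using opt unfolding optimal_schedule_def by blast
  have int: "\<theta> j integrable_on {a..b}" "(\<lambda>t. s (\<theta> j t)) integrable_on {a..b}" if "j \<in> {1..M}" for j
    using feasible_schedule_allocation_integrable[OF feas \<open>s 0 = 0\<close> mono that \<open>0 < a\<close>]
      feasible_schedule_service_integrable[OF feas \<open>s 0 = 0\<close> that] \<open>0 < a\<close> by auto
  have range: "\<theta> j u \<in> {0..B}" if "j \<in> {1..M}" "u \<in> {a..b}" for j u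
    using that \<open>0 < a\<close> feasible_schedule_nonneg[OF feas] feasible_schedule_le_bound[OF feas] by auto
  have flat_feas:
    "feasible_schedule M B s (\<lambda>j. x j + flattening_gain s a b (\<theta> j)) (\<lambda>j. flatten_on a b (\<theta> j)) T"
    using feas \<open>s 0 = 0\<close> mono \<open>0 < a\<close> \<open>a < b\<close> sep by (rule feasible_schedule_flatten_on)
  have "x i + flattening_gain s a b (\<theta> i) = x i"
    by (rule optimal_schedule_no_surplus[OF opt x_pos w_pos flat_feas _ i])
       (use flattening_gain_nonneg[OF conc der \<open>a < b\<close> int range] in auto)
  moreover have "0 < flattening_gain s a b (\<theta> i)"
    using flattening_gain_pos[OF conc der \<open>a < b\<close> int[OF i] range[OF i] t
        feasible_schedule_continuous_at_right[OF feas i] ne] \<open>0 < a\<close> t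
    by simp
  ultimately show False
    by simp
qed

lemma remaining_jobs_eq_imp_no_completion:
  assumes "a \<le> b" "remaining_jobs M T a = remaining_jobs M T b"
  obtains c where "b < c" "\<And>i. i \<in> {1..M} \<Longrightarrow> T i \<le> a \<or> c \<le> T i"
proof -
  define A where "A = {i \<in> {1..M}. a < T i}"
  have "{i \<in> {1..M}. b < T i} = A"
    using assms unfolding A_def remaining_jobs_def
    by (intro card_subset_eq) auto
  then have active_late: "b < T i" if "i \<in> A" for i
    using that by blast
  define c where "c = Min (insert (b + 1) (T ` A))"
  have fin: "finite (insert (b + 1) (T ` A))"
    by (simp add: A_def)
  have "c \<in> insert (b + 1) (T ` A)"
    unfolding c_def using fin by (rule Min_in) simp
  then have "b < c"
    using active_late by auto
  moreover have "T i \<le> a \<or> c \<le> T i" if "i \<in> {1..M}" for i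
  proof (cases "i \<in> A")
    case True
    then have "c \<le> T i"
      unfolding c_def using fin by (intro Min_le) auto
    then show ?thesis
      by simp
  next
    case False
    then show ?thesis
      using that by (simp add: A_def)
  qed
  ultimately show ?thesis
    using that by blast
qed

theorem proposition7:
  fixes M :: nat and B :: real and s :: "real \<Rightarrow> real"
    and x w :: "nat \<Rightarrow> real" and \<theta> :: "nat \<Rightarrow> real \<Rightarrow> real" and T :: "nat \<Rightarrow> real"
    and t1 t2 :: real
  assumes B_pos: "B > 0"
    and s_ok: "speedup_fn B s"
    and x_dec: "\<And>i j. 1 \<le> i \<Longrightarrow> i \<le> j \<Longrightarrow> j \<le> M \<Longrightarrow> x j \<le> x i"
    and x_pos: "\<And>i. i \<in> {1..M} \<Longrightarrow> x i > 0"
    and w_inc: "\<And>i j. 1 \<le> i \<Longrightarrow> i \<le> j \<Longrightarrow> j \<le> M \<Longrightarrow> w i \<le> w j"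
    and w_pos: "\<And>i. i \<in> {1..M} \<Longrightarrow> w i > 0"
    and opt: "optimal_schedule M B s x w \<theta> T"
    and t1_pos: "t1 > 0" and t2_pos: "t2 > 0"
    and same_m: "remaining_jobs M T t1 = remaining_jobs M T t2"
  shows "\<forall>i\<in>{1..M}. \<theta> i t1 = \<theta> i t2"
proof
  fix i
  assume i: "i \<in> {1..M}"
  obtain s' where der: "\<And>y. y \<in> {0..B} \<Longrightarrow> (s has_real_derivative s' y) (at y within {0..B})"
    using s_ok unfolding speedup_fn_def by blast
  have s: "s 0 = 0" "strict_mono_on {0..B} s" "strict_concave_on {0..B} s"
    using s_ok unfolding speedup_fn_def by blast+
  define a b where "a = min t1 t2" and "b = max t1 t2"
  have "a \<le> b"
    by (simp add: a_def b_def)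
  moreover have "remaining_jobs M T a = remaining_jobs M T b"
    using same_m by (simp add: a_def b_def min_def max_def)
  ultimately obtain c where "b < c" and sep: "\<And>i. i \<in> {1..M} \<Longrightarrow> T i \<le> a \<or> c \<le> T i"
    using remaining_jobs_eq_imp_no_completion by blast
  have flat: "\<theta> i t = interval_mean a c (\<theta> i)" if "t \<in> {t1, t2}" for t
    using \<open>b < c\<close> that t1_pos t2_pos
    by (intro optimal_schedule_flat_between_completions[OF opt x_pos w_pos s der _ _ sep i])
       (auto simp: a_def b_def)
  show "\<theta> i t1 = \<theta> i t2"
    using flat[of t1] flat[of t2] by simp
qed

end
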